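(* Let $r_n$ ($n\ge0$) denote the parity of the number of runs of $1$'s in the binary representation of $n$. Then the infinite word $r_0r_1r_2\cdots$ contains no fifth power: there is no nonempty finite word $X$ over $\{0,1\}$ such that $XXXXX$ occurs as a block of consecutive terms $r_a r_{a+1}\cdots r_{a+5|X|-1}$ for some $a\ge0$.
   Context: A run of $1$'s in the binary representation of $n$ is a maximal block of consecutive binary digits equal to $1$; parity means the number modulo $2$. *)

theory Defs
  imports Main
begin

definition bdig :: "nat \<Rightarrow> nat \<Rightarrow> nat" where
  "bdig n i = (n div 2 ^ i) mod 2"

text \<open>Number of runs (maximal blocks) of 1's in the binary representation of n:
  count the positions where a run starts when reading from the least significant
  digit, i.e. digit i is 1 and either i = 0 or digit i-1 is 0.  All positions
  with a 1 digit are below n, so restricting to i < n loses nothing.\<close>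
definition num_runs :: "nat \<Rightarrow> nat" where
  "num_runs n = card {i. i < n \<and> bdig n i = 1 \<and> (i = 0 \<or> bdig n (i - 1) = 0)}"

definition r :: "nat \<Rightarrow> nat" where
  "r n = num_runs n mod 2"

end

theory Submission
  imports Defs
begin

text \<open>Doubling shifts every run start by one, and appending a 1 digit adds a run start at 0
  unless it merges with a run starting at position 1.  Hence \<open>r (2n) = r n\<close> and
  \<open>r (2n+1) = r n\<close> or \<open>1 - r n\<close> according as \<open>n\<close> is odd or even, so
  \<open>r (2m) = r (2m+1)\<close> exactly when \<open>m\<close> is odd.  If a block \<open>r a \<dots> r (a+5p-1)\<close> had
  period \<open>p\<close>, then for odd \<open>p\<close> the aligned pairs at \<open>2m\<close> and \<open>2m+2p\<close> inside it would
  force \<open>m\<close> and \<open>m+p\<close> to have the same parity; for even \<open>p = 2q\<close> its even positions give,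
  via \<open>r (2n) = r n\<close>, a block of the same kind with period \<open>q\<close>.\<close>

lemma bdig_0: "bdig n 0 = n mod 2"
  by (simp add: bdig_def)

lemma bdig_Suc: "bdig n (Suc i) = bdig (n div 2) i"
  by (simp add: bdig_def div_mult2_eq)

lemma bdig_eq_1_imp_less: "bdig n i = 1 \<Longrightarrow> i < n"
proof -
  assume "bdig n i = 1"
  then have "n div 2 ^ i \<noteq> 0"
    by (auto simp: bdig_def)
  then have "2 ^ i \<le> n"
    by (simp add: div_eq_0_iff)
  moreover have "i < 2 ^ i" by simp
  ultimately show ?thesis by linarith
qed

definition run_starts :: "nat \<Rightarrow> nat set" where
  "run_starts n = {i. bdig n i = 1 \<and> (i = 0 \<or> bdig n (i - 1) = 0)}"

lemma num_runs_eq_card_run_starts: "num_runs n = card (run_starts n)"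
  unfolding num_runs_def run_starts_def by (metis bdig_eq_1_imp_less)

lemma finite_run_starts: "finite (run_starts n)"
  by (rule finite_subset[of _ "{..<n}"]) (auto simp: run_starts_def bdig_eq_1_imp_less)

lemma zero_in_run_starts_iff: "0 \<in> run_starts n \<longleftrightarrow> odd n"
  by (auto simp: run_starts_def bdig_0 odd_iff_mod_2_eq_one)

lemma run_starts_double: "run_starts (2 * n) = Suc ` run_starts n"
proof (rule set_eqI)
  fix i
  show "i \<in> run_starts (2 * n) \<longleftrightarrow> i \<in> Suc ` run_starts n"
    by (cases i; cases "i - 1")
       (auto simp: run_starts_def bdig_0 bdig_Suc image_iff)
qed

lemma run_starts_Suc_double:
  "run_starts (2 * n + 1) = insert 0 (Suc ` (run_starts n - {0}))"
proof (rule set_eqI)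
  fix i
  show "i \<in> run_starts (2 * n + 1) \<longleftrightarrow> i \<in> insert 0 (Suc ` (run_starts n - {0}))"
    by (cases i; cases "i - 1")
       (auto simp: run_starts_def bdig_0 bdig_Suc image_iff)
qed

lemma r_le_1: "r n \<le> 1"
  by (simp add: r_def)

lemma r_double: "r (2 * n) = r n"
  by (simp add: r_def num_runs_eq_card_run_starts run_starts_double card_image)

lemma r_Suc_double: "r (2 * n + 1) = (if odd n then r n else 1 - r n)"
proof -
  have card_eq: "card (run_starts (2 * n + 1)) = Suc (card (run_starts n - {0}))"
    unfolding run_starts_Suc_double by (simp add: card_image finite_run_starts)
  show ?thesis
  proof (cases "odd n")
    case True
    then have "0 \<in> run_starts n"
      by (simp add: zero_in_run_starts_iff)
    then have "Suc (card (run_starts n - {0})) = card (run_starts n)"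
      using finite_run_starts card_Diff1_less by (fastforce simp: card_Diff_singleton)
    then show ?thesis
      using True card_eq by (simp add: r_def num_runs_eq_card_run_starts)
  next
    case False
    then have "run_starts n - {0} = run_starts n"
      by (simp add: zero_in_run_starts_iff)
    then show ?thesis
      using False card_eq by (simp add: r_def num_runs_eq_card_run_starts mod_Suc)
  qed
qed

lemma r_double_eq_r_Suc_double_iff: "r (2 * m) = r (2 * m + 1) \<longleftrightarrow> odd m"
  using r_double[of m] r_Suc_double[of m] r_le_1[of m] by (cases "r m") auto

lemma window_shift_to_even:
  fixes P :: "nat \<Rightarrow> bool"
  assumes "\<forall>j<L. P (a + j)"
  obtains m where "\<forall>k<L - 1. P (2 * m + k)"
proof -
  define m :: nat where "m = (a + 1) div 2"
  have even_start: "2 * m = a + a mod 2"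
    unfolding m_def by presburger
  have "P (2 * m + k)" if "k < L - 1" for k
  proof -
    have "a mod 2 + k < L"
      using that mod_less[of a 2] by linarith
    then show ?thesis
      using assms even_start by (metis add.assoc)
  qed
  then show ?thesis
    using that by blast
qed

lemma r_no_periodic_block:
  assumes "0 < p"
  shows "\<not> (\<forall>j<4 * p. r (a + j) = r (a + j + p))"
  using assms
proof (induction p arbitrary: a rule: less_induct)
  case (less p)
  show ?case
  proof
    assume "\<forall>j<4 * p. r (a + j) = r (a + j + p)"
    then obtain m where periodic: "\<forall>k<4 * p - 1. r (2 * m + k) = r (2 * m + k + p)"
      using window_shift_to_even[where P = "\<lambda>i. r i = r (i + p)"] by blast
    show False
    proof (cases "even p")
      case True
      then obtain q where q: "p = 2 * q" by blast
      have "r (m + j) = r (m + j + q)" if "j < 4 * q" for j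
        using periodic[rule_format, of "2 * j"] that q r_double[of "m + j"] r_double[of "m + j + q"]
        by (simp add: algebra_simps)
      then show False
        using less.IH[of q m] q less.prems by auto
    next
      case False
      have "r (2 * m + k) = r (2 * (m + p) + k)" if "k \<le> 1" for k
        using periodic[rule_format, of k] periodic[rule_format, of "k + p"] that less.prems
        by (simp add: algebra_simps)
      from this[of 0] this[of 1] have "odd m \<longleftrightarrow> odd (m + p)"
        using r_double_eq_r_Suc_double_iff[of m] r_double_eq_r_Suc_double_iff[of "m + p"]
        by simp
      then show False
        using False by simp
    qed
  qed
qed

theorem theorem6:
  shows "\<not> (\<exists>X :: nat list. \<exists>a :: nat. X \<noteq> [] \<and> set X \<subseteq> {0, 1} \<and>
            (\<forall>j < 5 * length X. r (a + j) = X ! (j mod length X)))"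
proof
  assume "\<exists>X :: nat list. \<exists>a :: nat. X \<noteq> [] \<and> set X \<subseteq> {0, 1} \<and>
            (\<forall>j < 5 * length X. r (a + j) = X ! (j mod length X))"
  then obtain X a where "X \<noteq> []" and block: "\<forall>j < 5 * length X. r (a + j) = X ! (j mod length X)"
    by blast
  have "r (a + j) = r (a + j + length X)" if "j < 4 * length X" for j
    using block[rule_format, of j] block[rule_format, of "j + length X"] that
    by (simp add: add.assoc)
  then show False
    using r_no_periodic_block[of "length X" a] \<open>X \<noteq> []\<close> by auto
qed

end
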